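(* Let $d\ge2$ and consider the linear system $\mathcal{S}_d$ in the unknowns $\alpha_{d,1},\ldots,\alpha_{d,d}$ consisting of the equations \begin{itemize} \item $\alpha_{d,d}=d-2$; \item for every $1\le k\le\lfloor d/2\rfloor$: $(d-k-1)\alpha_{d,k}+(k-1)\alpha_{d,d-k}+\alpha_{d,d}=2\big(k(d-k)-d+1\big)$; \item for every $1\le k\le\lfloor (d-1)/2\rfloor$: $(d-k-1)\alpha_{d,k}+2(d-k-2)\alpha_{d,k+1}+k\,\alpha_{d,d-k-1}+2(k-1)\alpha_{d,d-k}+2\alpha_{d,d}=2\big(3k(d-k-1)-2d+3\big)$. \end{itemize} Then, provided that $\alpha_{d,d-1}:=d-3$, the system $\mathcal{S}_d$ admits the unique solution $(\alpha_{d,1},\ldots,\alpha_{d,d})=(-1,0,1,\ldots,d-2)$, i.e. $\alpha_{d,j}=j-2$ for all $1\le j\le d$. *)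

theory Defs
  imports Complex_Main
begin

definition system_S :: "nat \<Rightarrow> (nat \<Rightarrow> real) \<Rightarrow> bool" where
  "system_S d \<alpha> \<longleftrightarrow>
     \<alpha> d = real d - 2 \<and>
     (\<forall>k\<in>{1..d div 2}.
        (real d - real k - 1) * \<alpha> k + (real k - 1) * \<alpha> (d - k) + \<alpha> d
          = 2 * (real k * (real d - real k) - real d + 1)) \<and>
     (\<forall>k\<in>{1..(d - 1) div 2}.
        (real d - real k - 1) * \<alpha> k + 2 * (real d - real k - 2) * \<alpha> (k + 1)
          + real k * \<alpha> (d - k - 1) + 2 * (real k - 1) * \<alpha> (d - k) + 2 * \<alpha> d
          = 2 * (3 * real k * (real d - real k - 1) - 2 * real d + 3))"

end

theory Submission
  imports Defs
begin

(* The first equation for k = 1 reads (d - 2)(a_1 + 1) = 0, while a_(d-1) occurs in it with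
   coefficient k - 1 = 0; this is why a_(d-1) has to be prescribed. From then on the pair
   (a_(k+1), a_(d-k-1)) is determined by the first equation for k + 1 together with the second
   equation for k: eliminating a_(d-k-1) leaves (d - k - 2)(a_(k+1) - (k - 1)) = 0, and then
   k (a_(d-k-1) - (d - k - 3)) = 0. Induction on k thus fixes every unknown, and a_j = j - 2
   is checked to be a solution by direct substitution. *)

lemma system_S_last:
  "system_S d \<alpha> \<Longrightarrow> \<alpha> d = real d - 2"
  unfolding system_S_def by blast

lemma system_S_first_eq:
  assumes "system_S d \<alpha>" "1 \<le> k" "k \<le> d div 2"
  shows "(real d - real k - 1) * \<alpha> k + (real k - 1) * \<alpha> (d - k) + \<alpha> d
           = 2 * (real k * (real d - real k) - real d + 1)"
  using assms unfolding system_S_def by auto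

lemma system_S_second_eq:
  assumes "system_S d \<alpha>" "1 \<le> k" "k \<le> (d - 1) div 2"
  shows "(real d - real k - 1) * \<alpha> k + 2 * (real d - real k - 2) * \<alpha> (k + 1)
           + real k * \<alpha> (d - k - 1) + 2 * (real k - 1) * \<alpha> (d - k) + 2 * \<alpha> d
           = 2 * (3 * real k * (real d - real k - 1) - 2 * real d + 3)"
  using assms unfolding system_S_def by auto

lemma system_S_first_value:
  assumes "system_S d \<alpha>" "d \<ge> 3"
  shows "\<alpha> 1 = -1"
proof -
  have "(real d - 2) * (\<alpha> 1 + 1) = 0"
    using system_S_first_eq[OF assms(1), of 1] system_S_last[OF assms(1)] assms(2)
    by (simp add: algebra_simps)
  then show ?thesis using assms(2) by simp
qed

lemma system_S_pair_step:
  assumes S: "system_S d \<alpha>" and k: "1 \<le> k" "2 * k + 2 \<le> d"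
    and ih: "\<alpha> k = real k - 2" "\<alpha> (d - k) = real (d - k) - 2"
  shows "\<alpha> (Suc k) = real (Suc k) - 2 \<and> \<alpha> (d - Suc k) = real (d - Suc k) - 2"
proof -
  have dk: "real (d - k) = real d - real k" "real (d - Suc k) = real d - real k - 1"
    using k by (simp_all add: of_nat_diff)
  have ad: "\<alpha> d = real d - 2" using system_S_last[OF S] .
  have e1: "(real d - real k - 2) * \<alpha> (Suc k) + real k * \<alpha> (d - Suc k) + \<alpha> d
              = 2 * ((real k + 1) * (real d - real k - 1) - real d + 1)"
    using system_S_first_eq[OF S, of "Suc k"] k by (simp add: algebra_simps)
  have e2: "(real d - real k - 1) * \<alpha> k + 2 * (real d - real k - 2) * \<alpha> (Suc k)
              + real k * \<alpha> (d - Suc k) + 2 * (real k - 1) * \<alpha> (d - k) + 2 * \<alpha> d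
              = 2 * (3 * real k * (real d - real k - 1) - 2 * real d + 3)"
    using system_S_second_eq[OF S, of k] k by simp
  have "(real d - real k - 2) * (\<alpha> (Suc k) - (real k - 1)) = 0"
    using e1 e2 ih ad dk by (simp add: algebra_simps)
  moreover have "real d - real k - 2 \<noteq> 0" using k by simp
  ultimately have next_low: "\<alpha> (Suc k) = real k - 1" by simp
  have "real k * (\<alpha> (d - Suc k) - (real d - real k - 3)) = 0"
    using e1 next_low ad by (simp add: algebra_simps)
  then have "\<alpha> (d - Suc k) = real d - real k - 3" using k by simp
  with next_low dk show ?thesis by simp
qed

lemma system_S_pairs:
  assumes d: "d \<ge> 2" and S: "system_S d \<alpha>" and prescribed: "\<alpha> (d - 1) = real d - 3"
    and k: "1 \<le> k" "k \<le> d div 2"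
  shows "\<alpha> k = real k - 2 \<and> \<alpha> (d - k) = real (d - k) - 2"
  using k
proof (induction k rule: nat_induct_at_least)
  case base
  have "\<alpha> 1 = -1"
    using d S prescribed system_S_first_value[OF S] by (cases "d = 2") auto
  then show ?case using prescribed d by (simp add: of_nat_diff)
next
  case (Suc k)
  then show ?case using system_S_pair_step[OF S] by simp
qed

lemma system_S_unique:
  assumes "d \<ge> 2" "system_S d \<alpha>" "\<alpha> (d - 1) = real d - 3" "j \<in> {1..d}"
  shows "\<alpha> j = real j - 2"
proof -
  consider "j \<le> d div 2" | "j = d" | "1 \<le> d - j" "d - j \<le> d div 2"
    using assms(4) by fastforce
  then show ?thesis
  proof cases
    case 1
    then show ?thesis using system_S_pairs[OF assms(1-3), of j] assms(4) by auto
  next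
    case 2
    then show ?thesis using system_S_last[OF assms(2)] by simp
  next
    case 3
    then show ?thesis using system_S_pairs[OF assms(1-3), of "d - j"] assms(4) by auto
  qed
qed

lemma system_S_solution:
  assumes "d \<ge> 1" "\<forall>j\<in>{1..d}. \<alpha> j = real j - 2"
  shows "system_S d \<alpha>"
  unfolding system_S_def
proof (intro conjI ballI)
  show "\<alpha> d = real d - 2" using assms by simp
next
  fix k assume "k \<in> {1..d div 2}"
  then have known: "\<alpha> k = real k - 2" "\<alpha> (d - k) = real d - real k - 2" "\<alpha> d = real d - 2"
    using assms by (auto simp: of_nat_diff)
  show "(real d - real k - 1) * \<alpha> k + (real k - 1) * \<alpha> (d - k) + \<alpha> d
               = 2 * (real k * (real d - real k) - real d + 1)"
    unfolding known by (simp add: algebra_simps)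
next
  fix k assume "k \<in> {1..(d - 1) div 2}"
  then have known: "\<alpha> k = real k - 2" "\<alpha> (k + 1) = real k - 1" "\<alpha> (d - k - 1) = real d - real k - 3"
      "\<alpha> (d - k) = real d - real k - 2" "\<alpha> d = real d - 2"
    using assms by (auto simp: of_nat_diff)
  show "(real d - real k - 1) * \<alpha> k + 2 * (real d - real k - 2) * \<alpha> (k + 1)
               + real k * \<alpha> (d - k - 1) + 2 * (real k - 1) * \<alpha> (d - k) + 2 * \<alpha> d
               = 2 * (3 * real k * (real d - real k - 1) - 2 * real d + 3)"
    unfolding known by (simp add: algebra_simps)
qed

theorem proposition4p15:
  fixes d :: nat
  assumes "d \<ge> 2"
  shows "\<forall>\<alpha> :: nat \<Rightarrow> real.
           (system_S d \<alpha> \<and> \<alpha> (d - 1) = real d - 3)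
             \<longleftrightarrow> (\<forall>j\<in>{1..d}. \<alpha> j = real j - 2)"
proof (intro allI iffI)
  fix \<alpha> :: "nat \<Rightarrow> real"
  assume "system_S d \<alpha> \<and> \<alpha> (d - 1) = real d - 3"
  then show "\<forall>j\<in>{1..d}. \<alpha> j = real j - 2"
    using system_S_unique assms by blast
next
  fix \<alpha> :: "nat \<Rightarrow> real"
  assume sol: "\<forall>j\<in>{1..d}. \<alpha> j = real j - 2"
  then have "\<alpha> (d - 1) = real (d - 1) - 2" using assms by simp
  then show "system_S d \<alpha> \<and> \<alpha> (d - 1) = real d - 3"
    using system_S_solution[OF _ sol] assms by (simp add: of_nat_diff)
qed

end
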